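(* For every $n\ge1$, the formula $\Phi_n$ separates $\mathcal{A}$ from $\mathcal{B}$, i.e. every trace in $\mathcal A$ satisfies $\Phi_n$ and no trace in $\mathcal B$ satisfies $\Phi_n$.
   Context: Fix $n\ge1$, atomic propositions $AP=\{\tilde p,\tilde q\}\cup P\cup Q$ with $P=\{p_1,\dots,p_n\}$, $Q=\{q_1,\dots,q_n\}$ (all distinct), $\Sigma=2^{AP}$. Formulae use literals, $\land,\lor$, $\mathsf F$ and $\mathsf O$, interpreted on finite non-empty traces $\sigma\in\Sigma^+$ at positions $0\le i<|\sigma|$: $\mathsf F\phi$ holds at $i$ iff $\phi$ holds at some $j$ with $i\le j<|\sigma|$; $\mathsf O\phi$ holds at $i$ iff $\phi$ holds at some $0\le j\le i$; $\sigma$ satisfies $\phi$ iff $\phi$ holds at position $0$. $\Phi_n := \mathsf{F}\big(\tilde q\land\bigwedge_{i=1}^n\big((q_i\land\mathsf{O}(\tilde p\land p_i))\lor(\neg q_i\land\mathsf{O}(\tilde p\land\neg p_i))\big)\big)$. Let $\alpha(n)=2^{n+1}(n+2)^2$. Let $T_P=\{\tau\in\Sigma:\tilde p\in\tau,\ \tau\subseteq P\cup\{\tilde p\}\}$ and $T_Q=\{\tau\in\Sigma:\tilde q\in\tau,\ \tau\subseteq Q\cup\{\tilde q\}\}$; for $\tau\in T_Q$ let $\overline\tau\in T_P$ be the letter with $p_i\in\overline\tau$ iff $q_i\in\tau$ for all $i$. Fix an arbitrary strict total order $\prec$ on $T_Q$, and let $\mathrm{Enum}$ be the unique word in $(\emptyset^{\alpha(n)}\cdot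 T_Q)^{2^n}\cdot\emptyset^{\alpha(n)}$ (here $\emptyset$ denotes the letter with no propositions) that lists every element of $T_Q$ exactly once in increasing $\prec$-order. For $\tau\in T_Q$, $\mathrm{Enum}_{-\tau}$ is obtained from $\mathrm{Enum}$ by deleting the unique position of letter $\tau$ together with the $\alpha(n)$ positions of letter $\emptyset$ immediately preceding it. Define $\mathcal A=\{\emptyset^j\cdot\overline\tau\cdot\mathrm{Enum}: j\in\mathbb N,\tau\in T_Q\}$ and $\mathcal B=\{\emptyset^j\cdot\overline\tau\cdot\mathrm{Enum}_{-\tau}: j\in\mathbb N,\tau\in T_Q\}$. *)

theory Defs
  imports Main
begin

(* Atomic propositions: Pt = p~, Qt = q~, P i = p_i, Q i = q_i (indices 1..n are used). *)
datatype atom = Pt | Qt | P nat | Q nat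

type_synonym letter = "atom set"
type_synonym trace = "letter list"

datatype fml = Pos atom | Neg atom | And fml fml | Or fml fml | Fut fml | Once fml

(* Semantics on finite traces at position i < length \<sigma>. *)
fun holds :: "trace \<Rightarrow> nat \<Rightarrow> fml \<Rightarrow> bool" where
  "holds \<sigma> i (Pos a) = (a \<in> \<sigma> ! i)"
| "holds \<sigma> i (Neg a) = (a \<notin> \<sigma> ! i)"
| "holds \<sigma> i (And \<phi> \<psi>) = (holds \<sigma> i \<phi> \<and> holds \<sigma> i \<psi>)"
| "holds \<sigma> i (Or \<phi> \<psi>) = (holds \<sigma> i \<phi> \<or> holds \<sigma> i \<psi>)"
| "holds \<sigma> i (Fut \<phi>) = (\<exists>j. i \<le> j \<and> j < length \<sigma> \<and> holds \<sigma> j \<phi>)"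
| "holds \<sigma> i (Once \<phi>) = (\<exists>j\<le>i. holds \<sigma> j \<phi>)"

definition models :: "trace \<Rightarrow> fml \<Rightarrow> bool" where
  "models \<sigma> \<phi> \<longleftrightarrow> \<sigma> \<noteq> [] \<and> holds \<sigma> 0 \<phi>"

fun conj_list :: "fml list \<Rightarrow> fml" where
  "conj_list [] = Pos Pt" (* never used: only applied to non-empty lists *)
| "conj_list [\<phi>] = \<phi>"
| "conj_list (\<phi> # \<psi> # \<phi>s) = And \<phi> (conj_list (\<psi> # \<phi>s))"

definition Phi :: "nat \<Rightarrow> fml" where
  "Phi n = Fut (And (Pos Qt)
     (conj_list (map (\<lambda>i. Or (And (Pos (Q i)) (Once (And (Pos Pt) (Pos (P i)))))
                              (And (Neg (Q i)) (Once (And (Pos Pt) (Neg (P i))))))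
                     [1..<n+1])))"

definition alpha :: "nat \<Rightarrow> nat" where
  "alpha n = 2 ^ (n + 1) * (n + 2) ^ 2"

definition T_P :: "nat \<Rightarrow> letter set" where
  "T_P n = {\<tau>. Pt \<in> \<tau> \<and> \<tau> \<subseteq> insert Pt (P ` {1..n})}"

definition T_Q :: "nat \<Rightarrow> letter set" where
  "T_Q n = {\<tau>. Qt \<in> \<tau> \<and> \<tau> \<subseteq> insert Qt (Q ` {1..n})}"

definition bar :: "nat \<Rightarrow> letter \<Rightarrow> letter" where
  "bar n \<tau> = insert Pt {P i | i. i \<in> {1..n} \<and> Q i \<in> \<tau>}"

definition strict_total_on :: "'a set \<Rightarrow> ('a \<Rightarrow> 'a \<Rightarrow> bool) \<Rightarrow> bool" where
  "strict_total_on S r \<longleftrightarrow>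
     (\<forall>x\<in>S. \<not> r x x) \<and>
     (\<forall>x\<in>S. \<forall>y\<in>S. \<forall>z\<in>S. r x y \<longrightarrow> r y z \<longrightarrow> r x z) \<and>
     (\<forall>x\<in>S. \<forall>y\<in>S. x \<noteq> y \<longrightarrow> r x y \<or> r y x)"

definition enum_list :: "nat \<Rightarrow> (letter \<Rightarrow> letter \<Rightarrow> bool) \<Rightarrow> letter list" where
  "enum_list n ord = (THE L. distinct L \<and> set L = T_Q n \<and> sorted_wrt ord L)"

definition blocks :: "nat \<Rightarrow> letter list \<Rightarrow> trace" where
  "blocks n L = concat (map (\<lambda>\<tau>. replicate (alpha n) {} @ [\<tau>]) L) @ replicate (alpha n) {}"

definition Enum :: "nat \<Rightarrow> (letter \<Rightarrow> letter \<Rightarrow> bool) \<Rightarrow> trace" where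
  "Enum n ord = blocks n (enum_list n ord)"

(* Enum with the letter \<tau> and the \<alpha>(n) empty letters immediately before it deleted. *)
definition Enum_minus :: "nat \<Rightarrow> (letter \<Rightarrow> letter \<Rightarrow> bool) \<Rightarrow> letter \<Rightarrow> trace" where
  "Enum_minus n ord \<tau> = blocks n (remove1 \<tau> (enum_list n ord))"

definition A_set :: "nat \<Rightarrow> (letter \<Rightarrow> letter \<Rightarrow> bool) \<Rightarrow> trace set" where
  "A_set n ord = {replicate j {} @ [bar n \<tau>] @ Enum n ord | j \<tau>. \<tau> \<in> T_Q n}"

definition B_set :: "nat \<Rightarrow> (letter \<Rightarrow> letter \<Rightarrow> bool) \<Rightarrow> trace set" where
  "B_set n ord = {replicate j {} @ [bar n \<tau>] @ Enum_minus n ord \<tau> | j \<tau>. \<tau> \<in> T_Q n}"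

end

theory Submission
  imports Defs
begin

(*
  In every trace of A and B the marker \<overline>\<tau> is the only letter containing p~, and every
  letter containing q~ comes after it. Hence at a q~-position each O-subformula of \<Phi>_n can only
  look back at the marker, and \<Phi>_n holds iff some q~-letter agrees with \<tau> on every q_i, i.e. iff
  \<tau> itself occurs later in the trace. It does in Enum and, Enum listing each letter once,
  not in Enum_{-\<tau>}.
*)

lemma strict_total_on_subset: "S \<subseteq> T \<Longrightarrow> strict_total_on T r \<Longrightarrow> strict_total_on S r"
  unfolding strict_total_on_def by blast

lemma sorted_wrt_irrefl_distinct:
  "\<forall>x\<in>set xs. \<not> r x x \<Longrightarrow> sorted_wrt r xs \<Longrightarrow> distinct xs"
  by (induction xs) auto

lemma sorted_wrt_strict_total_exists:
  assumes "finite S" "strict_total_on S r"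
  shows "\<exists>xs. set xs = S \<and> sorted_wrt r xs"
  using assms
proof (induction S rule: finite_induct)
  case (insert x S)
  obtain xs where xs: "set xs = S" "sorted_wrt r xs"
    using insert.IH strict_total_on_subset[OF _ insert.prems] by blast
  let ?ys = "filter (\<lambda>y. r y x) xs @ x # filter (\<lambda>y. r x y) xs"
  have "set ?ys = insert x S"
    using insert.prems insert.hyps(2) xs(1) unfolding strict_total_on_def by auto
  moreover have "sorted_wrt r ?ys"
    using insert.prems xs unfolding strict_total_on_def
    by (auto simp: sorted_wrt_append sorted_wrt_filter)
  ultimately show ?case by blast
qed simp

lemma sorted_wrt_strict_total_unique:
  assumes "strict_total_on (set xs) r" "sorted_wrt r xs" "sorted_wrt r ys" "set xs = set ys"
  shows "xs = ys"
  using assms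
proof (induction xs arbitrary: ys)
  case (Cons x xs)
  then obtain y ys' where ys: "ys = y # ys'"
    by (cases ys) auto
  have irrefl: "\<not> r z z" if "z \<in> set (x # xs)" for z
    using Cons.prems(1) that unfolding strict_total_on_def by blast
  have "x = y"
  proof (rule ccontr)
    assume "x \<noteq> y"
    then have "r x y" "r y x"
      using Cons.prems(2-4) ys by auto
    moreover have "y \<in> set (x # xs)"
      using Cons.prems(4) ys by simp
    ultimately have "r x x"
      using Cons.prems(1) unfolding strict_total_on_def by (meson list.set_intros(1))
    then show False
      using irrefl by simp
  qed
  moreover have "x \<notin> set xs" "y \<notin> set ys'"
    using Cons.prems(2,3) ys irrefl Cons.prems(4) by auto
  ultimately have "set xs = set ys'"
    using Cons.prems(4) ys by auto
  then have "xs = ys'"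
    using Cons.IH[of ys'] Cons.prems(1-3) ys strict_total_on_subset[of "set xs" "set (x # xs)"]
    by auto
  then show ?case
    using \<open>x = y\<close> ys by simp
qed simp

lemma ex1_sorted_wrt_strict_total:
  assumes "finite S" "strict_total_on S r"
  shows "\<exists>!xs. distinct xs \<and> set xs = S \<and> sorted_wrt r xs"
proof (rule ex_ex1I)
  have "\<forall>x\<in>S. \<not> r x x"
    using assms(2) unfolding strict_total_on_def by blast
  then show "\<exists>xs. distinct xs \<and> set xs = S \<and> sorted_wrt r xs"
    using sorted_wrt_strict_total_exists[OF assms] sorted_wrt_irrefl_distinct by metis
next
  fix xs ys
  assume "distinct xs \<and> set xs = S \<and> sorted_wrt r xs" "distinct ys \<and> set ys = S \<and> sorted_wrt r ys"
  then show "xs = ys"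
    using sorted_wrt_strict_total_unique assms(2) by metis
qed

lemma finite_T_Q: "finite (T_Q n)"
proof (rule finite_subset)
  show "T_Q n \<subseteq> Pow (insert Qt (Q ` {1..n}))"
    unfolding T_Q_def by blast
qed simp

lemma set_enum_list: "strict_total_on (T_Q n) ord \<Longrightarrow> set (enum_list n ord) = T_Q n"
  using theI'[OF ex1_sorted_wrt_strict_total[OF finite_T_Q]] unfolding enum_list_def by blast

lemma distinct_enum_list: "strict_total_on (T_Q n) ord \<Longrightarrow> distinct (enum_list n ord)"
  using theI'[OF ex1_sorted_wrt_strict_total[OF finite_T_Q]] unfolding enum_list_def by blast

lemma T_Q_eqI:
  assumes "\<rho> \<in> T_Q n" "\<tau> \<in> T_Q n" "\<forall>i\<in>{1..n}. Q i \<in> \<rho> \<longleftrightarrow> Q i \<in> \<tau>"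
  shows "\<rho> = \<tau>"
proof (rule set_eqI)
  show "a \<in> \<rho> \<longleftrightarrow> a \<in> \<tau>" for a
    using assms by (cases a) (auto simp: T_Q_def)
qed

lemma bex_agreeing_T_Q_iff:
  assumes "A \<subseteq> T_Q n" "\<tau> \<in> T_Q n"
  shows "(\<exists>\<rho>\<in>A. Qt \<in> \<rho> \<and> (\<forall>i\<in>{1..n}. Q i \<in> \<rho> \<longleftrightarrow> Q i \<in> \<tau>)) \<longleftrightarrow> \<tau> \<in> A"
proof
  assume "\<exists>\<rho>\<in>A. Qt \<in> \<rho> \<and> (\<forall>i\<in>{1..n}. Q i \<in> \<rho> \<longleftrightarrow> Q i \<in> \<tau>)"
  then show "\<tau> \<in> A"
    using assms(1) T_Q_eqI[OF _ assms(2)] by blast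
next
  assume "\<tau> \<in> A"
  moreover have "Qt \<in> \<tau>"
    using assms(2) by (simp add: T_Q_def)
  ultimately show "\<exists>\<rho>\<in>A. Qt \<in> \<rho> \<and> (\<forall>i\<in>{1..n}. Q i \<in> \<rho> \<longleftrightarrow> Q i \<in> \<tau>)"
    by blast
qed

lemma Pt_in_bar: "Pt \<in> bar n \<tau>"
  by (simp add: bar_def)

lemma Qt_notin_bar: "Qt \<notin> bar n \<tau>"
  by (simp add: bar_def)

lemma P_in_bar_iff: "P i \<in> bar n \<tau> \<longleftrightarrow> i \<in> {1..n} \<and> Q i \<in> \<tau>"
  by (auto simp: bar_def)

lemma holds_conj_list:
  "\<phi>s \<noteq> [] \<Longrightarrow> holds \<sigma> k (conj_list \<phi>s) \<longleftrightarrow> (\<forall>\<phi>\<in>set \<phi>s. holds \<sigma> k \<phi>)"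
  by (induction \<phi>s rule: conj_list.induct) auto

lemma models_Phi_iff:
  assumes "n \<ge> 1"
  shows "models \<sigma> (Phi n) \<longleftrightarrow>
    (\<exists>k<length \<sigma>. Qt \<in> \<sigma> ! k \<and> (\<forall>i\<in>{1..n}.
       (Q i \<in> \<sigma> ! k \<and> (\<exists>j\<le>k. Pt \<in> \<sigma> ! j \<and> P i \<in> \<sigma> ! j)) \<or>
       (Q i \<notin> \<sigma> ! k \<and> (\<exists>j\<le>k. Pt \<in> \<sigma> ! j \<and> P i \<notin> \<sigma> ! j))))"
  using assms
  by (auto simp: models_def Phi_def holds_conj_list atLeastLessThanSuc_atLeastAtMost simp del: upt_Suc)

lemma models_Phi_single_marker_iff:
  assumes "n \<ge> 1" "j < length \<sigma>"
    and marker: "\<And>k. k < length \<sigma> \<Longrightarrow> Pt \<in> \<sigma> ! k \<longleftrightarrow> k = j"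
    and query_after_marker: "\<And>k. k < length \<sigma> \<Longrightarrow> Qt \<in> \<sigma> ! k \<Longrightarrow> j < k"
  shows "models \<sigma> (Phi n) \<longleftrightarrow>
    (\<exists>\<rho>\<in>set \<sigma>. Qt \<in> \<rho> \<and> (\<forall>i\<in>{1..n}. Q i \<in> \<rho> \<longleftrightarrow> P i \<in> \<sigma> ! j))"
proof -
  have once: "(\<exists>j'\<le>k. Pt \<in> \<sigma> ! j' \<and> X (\<sigma> ! j')) \<longleftrightarrow> X (\<sigma> ! j)"
    if "j < k" "k < length \<sigma>" for k X
  proof
    assume "\<exists>j'\<le>k. Pt \<in> \<sigma> ! j' \<and> X (\<sigma> ! j')"
    then obtain j' where j': "j' \<le> k" "Pt \<in> \<sigma> ! j'" "X (\<sigma> ! j')"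
      by blast
    then have "j' = j"
      using marker[of j'] that(2) by simp
    then show "X (\<sigma> ! j)"
      using j'(3) by simp
  next
    assume "X (\<sigma> ! j)"
    moreover have "Pt \<in> \<sigma> ! j"
      using marker assms(2) by simp
    ultimately show "\<exists>j'\<le>k. Pt \<in> \<sigma> ! j' \<and> X (\<sigma> ! j')"
      using that(1) by (intro exI[of _ j]) simp
  qed
  have agree: "(Q i \<in> \<sigma> ! k \<and> (\<exists>j\<le>k. Pt \<in> \<sigma> ! j \<and> P i \<in> \<sigma> ! j)) \<or>
      (Q i \<notin> \<sigma> ! k \<and> (\<exists>j\<le>k. Pt \<in> \<sigma> ! j \<and> P i \<notin> \<sigma> ! j)) \<longleftrightarrow>
    (Q i \<in> \<sigma> ! k \<longleftrightarrow> P i \<in> \<sigma> ! j)" if "k < length \<sigma>" "Qt \<in> \<sigma> ! k" for k i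
    using once[of k "\<lambda>\<rho>. P i \<in> \<rho>"] once[of k "\<lambda>\<rho>. P i \<notin> \<rho>"] query_after_marker[OF that]
      that(1)
    by auto
  have "models \<sigma> (Phi n) \<longleftrightarrow>
    (\<exists>k<length \<sigma>. Qt \<in> \<sigma> ! k \<and> (\<forall>i\<in>{1..n}. Q i \<in> \<sigma> ! k \<longleftrightarrow> P i \<in> \<sigma> ! j))"
    unfolding models_Phi_iff[OF assms(1)]
    by (rule ex_cong1) (use agree in \<open>auto cong: conj_cong\<close>)
  also have "\<dots> \<longleftrightarrow> (\<exists>\<rho>\<in>set \<sigma>. Qt \<in> \<rho> \<and> (\<forall>i\<in>{1..n}. Q i \<in> \<rho> \<longleftrightarrow> P i \<in> \<sigma> ! j))"
    by (auto simp: set_conv_nth)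
  finally show ?thesis .
qed

lemma nth_replicate_append_Cons:
  "(replicate j a @ x # w) ! k = (if k < j then a else if k = j then x else w ! (k - j - 1))"
  by (auto simp: nth_append)

lemma set_blocks: "set (blocks n M) = insert {} (set M)"
  by (auto simp: blocks_def alpha_def)

lemma models_Phi_blocks_iff:
  assumes "n \<ge> 1" "set M \<subseteq> T_Q n" "\<tau> \<in> T_Q n"
  shows "models (replicate j {} @ [bar n \<tau>] @ blocks n M) (Phi n) \<longleftrightarrow> \<tau> \<in> set M"
proof -
  let ?\<sigma> = "replicate j {} @ bar n \<tau> # blocks n M"
  have no_marker: "\<forall>\<rho>\<in>set (blocks n M). Pt \<notin> \<rho>"
    using assms(2) by (auto simp: set_blocks T_Q_def)
  have later_letter: "?\<sigma> ! k \<in> set (blocks n M)" if "j < k" "k < length ?\<sigma>" for k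
    using that by (simp add: nth_replicate_append_Cons)
  have marker: "Pt \<in> ?\<sigma> ! k \<longleftrightarrow> k = j" if "k < length ?\<sigma>" for k
    using no_marker later_letter[OF _ that] Pt_in_bar
    by (cases "j < k") (auto simp: nth_replicate_append_Cons)
  have query_after_marker: "j < k" if "k < length ?\<sigma>" "Qt \<in> ?\<sigma> ! k" for k
    using that Qt_notin_bar by (auto simp: nth_replicate_append_Cons split: if_splits)
  have "models ?\<sigma> (Phi n) \<longleftrightarrow>
    (\<exists>\<rho>\<in>set ?\<sigma>. Qt \<in> \<rho> \<and> (\<forall>i\<in>{1..n}. Q i \<in> \<rho> \<longleftrightarrow> P i \<in> bar n \<tau>))"
    using models_Phi_single_marker_iff[OF assms(1), of j ?\<sigma>] marker query_after_marker
    by (simp add: nth_replicate_append_Cons)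
  also have "\<dots> \<longleftrightarrow> (\<exists>\<rho>\<in>set M. Qt \<in> \<rho> \<and> (\<forall>i\<in>{1..n}. Q i \<in> \<rho> \<longleftrightarrow> Q i \<in> \<tau>))"
    using Qt_notin_bar by (auto simp: set_blocks P_in_bar_iff)
  also have "\<dots> \<longleftrightarrow> \<tau> \<in> set M"
    using bex_agreeing_T_Q_iff[OF assms(2,3)] .
  finally show ?thesis
    by simp
qed

theorem lemma3:
  fixes n :: nat and ord :: "letter \<Rightarrow> letter \<Rightarrow> bool"
  assumes "n \<ge> 1"
    and "strict_total_on (T_Q n) ord"
  shows "(\<forall>\<sigma>\<in>A_set n ord. models \<sigma> (Phi n)) \<and> (\<forall>\<sigma>\<in>B_set n ord. \<not> models \<sigma> (Phi n))"
proof (intro conjI ballI)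
  fix \<sigma> assume "\<sigma> \<in> A_set n ord"
  then obtain j \<tau> where "\<sigma> = replicate j {} @ [bar n \<tau>] @ Enum n ord" "\<tau> \<in> T_Q n"
    unfolding A_set_def by blast
  then show "models \<sigma> (Phi n)"
    using models_Phi_blocks_iff[OF assms(1)] set_enum_list[OF assms(2)]
    unfolding Enum_def by simp
next
  fix \<sigma> assume "\<sigma> \<in> B_set n ord"
  then obtain j \<tau> where "\<sigma> = replicate j {} @ [bar n \<tau>] @ Enum_minus n ord \<tau>" "\<tau> \<in> T_Q n"
    unfolding B_set_def by blast
  moreover have "set (remove1 \<tau> (enum_list n ord)) = T_Q n - {\<tau>}"
    using set_remove1_eq[OF distinct_enum_list[OF assms(2)]] set_enum_list[OF assms(2)] by simp
  ultimately show "\<not> models \<sigma> (Phi n)"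
    using models_Phi_blocks_iff[OF assms(1)] unfolding Enum_minus_def by simp
qed

end
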